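(* Consider the parallel multiple access channel power allocation game and the replicator dynamics described in the context. Let $q\in\Delta$ be the (almost surely unique) Nash equilibrium of the game. Then every solution orbit $p(t)$ of the replicator dynamics whose initial point $p(0)$ has finite Kullback–Leibler divergence $H_q(p(0))<\infty$ converges to $q$ as $t\to\infty$. Furthermore, even if the game does not admit a unique Nash equilibrium, every solution trajectory starting in the interior of $\Delta$ converges to a Nash equilibrium (a single point, not merely to the set of Nash equilibria).
   Context: Setting: users $\mathcal{K}=\{1,\dots,K\}$, nodes $\mathcal{A}=\{1,\dots,A\}$. User $k$ has maximum power $P_k>0$ and strategy set $\Delta_k=\{p_k\in\mathbb{R}^{\mathcal{A}}: p_{k\alpha}\ge 0,\ \sum_\alpha p_{k\alpha}=P_k\}$; $\Delta=\prod_k\Delta_k$. Payoffs: $u_k(p)=\sum_{\alpha} b_\alpha\log\bigl(1+\frac{g_{k\alpha}p_{k\alpha}}{\sigma_\alpha^2+\sum_{\ell\neq k}g_{\ell\alpha}p_{\ell\alpha}}\bigr)$ with constants $b_\alpha>0$, $\sigma_\alpha^2>0$ and channel gains $g_{k\alpha}>0$ drawn from a continuous (nonatomic) probability distribution on the positive reals. $q\in\Delta$ is a Nash equilibrium if $u_k(q)\ge u_k(q_{-k};q_k')$ for all $k$ and $q_k'\in\Delta_k$. Define $v_{k\alpha}(p)=\frac{b_\alpha g_{k\alpha}}{\sigma_\alpha^2+\sum_{\ell}g_{\ell\alpha}p_{\ell\alpha}}$ and $v_k(p)=P_k^{-1}\sum_\beta p_{k\beta}v_{k\beta}(p)$. The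 replicator dynamics are the ODE $\frac{dp_{k\alpha}}{dt}=p_{k\alpha}\bigl(v_{k\alpha}(p(t))-v_k(p(t))\bigr)$ on $\Delta$. The Kullback–Leibler divergence of $p$ with respect to $q$ is $H_q(p)=\sum_{k,\alpha}q_{k\alpha}\log(q_{k\alpha}/p_{k\alpha})$ (terms with $q_{k\alpha}=0$ are zero), finite iff $p_{k\alpha}>0$ whenever $q_{k\alpha}>0$. *)

theory Defs
  imports "HOL-Analysis.Analysis"
begin

text \<open>Users are indexed by {1..K}, nodes by {1..A}. A power profile is
  p :: nat => nat => real with p k a the power of user k on node a
  (values outside the index ranges are irrelevant).
  s a stands for the noise variance sigma_a^2.\<close>

definition strat_k :: "nat \<Rightarrow> (nat \<Rightarrow> real) \<Rightarrow> real \<Rightarrow> bool" where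
  "strat_k A r Pk \<longleftrightarrow> (\<forall>a\<in>{1..A}. 0 \<le> r a) \<and> (\<Sum>a=1..A. r a) = Pk"

definition in_Delta :: "nat \<Rightarrow> nat \<Rightarrow> (nat \<Rightarrow> real) \<Rightarrow> (nat \<Rightarrow> nat \<Rightarrow> real) \<Rightarrow> bool" where
  "in_Delta K A P p \<longleftrightarrow> (\<forall>k\<in>{1..K}. strat_k A (p k) (P k))"

definition payoff ::
  "nat \<Rightarrow> nat \<Rightarrow> (nat \<Rightarrow> real) \<Rightarrow> (nat \<Rightarrow> real) \<Rightarrow> (nat \<Rightarrow> nat \<Rightarrow> real)
   \<Rightarrow> (nat \<Rightarrow> nat \<Rightarrow> real) \<Rightarrow> nat \<Rightarrow> real" where
  "payoff K A b s g p k =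
     (\<Sum>a=1..A. b a * ln (1 + g k a * p k a / (s a + (\<Sum>l\<in>{1..K} - {k}. g l a * p l a))))"

definition nash_eq ::
  "nat \<Rightarrow> nat \<Rightarrow> (nat \<Rightarrow> real) \<Rightarrow> (nat \<Rightarrow> real) \<Rightarrow> (nat \<Rightarrow> real)
   \<Rightarrow> (nat \<Rightarrow> nat \<Rightarrow> real) \<Rightarrow> (nat \<Rightarrow> nat \<Rightarrow> real) \<Rightarrow> bool" where
  "nash_eq K A P b s g q \<longleftrightarrow> in_Delta K A P q \<and>
     (\<forall>k\<in>{1..K}. \<forall>r. strat_k A r (P k) \<longrightarrow>
        payoff K A b s g (q(k := r)) k \<le> payoff K A b s g q k)"

definition vel ::
  "nat \<Rightarrow> (nat \<Rightarrow> real) \<Rightarrow> (nat \<Rightarrow> real) \<Rightarrow> (nat \<Rightarrow> nat \<Rightarrow> real)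
   \<Rightarrow> (nat \<Rightarrow> nat \<Rightarrow> real) \<Rightarrow> nat \<Rightarrow> nat \<Rightarrow> real" where
  "vel K b s g p k a = b a * g k a / (s a + (\<Sum>l=1..K. g l a * p l a))"

definition vel_avg ::
  "nat \<Rightarrow> nat \<Rightarrow> (nat \<Rightarrow> real) \<Rightarrow> (nat \<Rightarrow> real) \<Rightarrow> (nat \<Rightarrow> real)
   \<Rightarrow> (nat \<Rightarrow> nat \<Rightarrow> real) \<Rightarrow> (nat \<Rightarrow> nat \<Rightarrow> real) \<Rightarrow> nat \<Rightarrow> real" where
  "vel_avg K A P b s g p k = (\<Sum>c=1..A. p k c * vel K b s g p k c) / P k"

definition replicator_solution ::
  "nat \<Rightarrow> nat \<Rightarrow> (nat \<Rightarrow> real) \<Rightarrow> (nat \<Rightarrow> real) \<Rightarrow> (nat \<Rightarrow> real)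
   \<Rightarrow> (nat \<Rightarrow> nat \<Rightarrow> real) \<Rightarrow> (real \<Rightarrow> nat \<Rightarrow> nat \<Rightarrow> real) \<Rightarrow> bool" where
  "replicator_solution K A P b s g p \<longleftrightarrow>
     (\<forall>t\<ge>0. in_Delta K A P (p t)) \<and>
     (\<forall>t\<ge>0. \<forall>k\<in>{1..K}. \<forall>a\<in>{1..A}.
        ((\<lambda>\<tau>. p \<tau> k a) has_real_derivative
           p t k a * (vel K b s g (p t) k a - vel_avg K A P b s g (p t) k))
        (at t within {0..}))"

text \<open>H_q(p) < \<infinity>  iff  p k a > 0 whenever q k a > 0.\<close>
definition KL_finite :: "nat \<Rightarrow> nat \<Rightarrow> (nat \<Rightarrow> nat \<Rightarrow> real) \<Rightarrow> (nat \<Rightarrow> nat \<Rightarrow> real) \<Rightarrow> bool" where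
  "KL_finite K A q p \<longleftrightarrow> (\<forall>k\<in>{1..K}. \<forall>a\<in>{1..A}. 0 < q k a \<longrightarrow> 0 < p k a)"

definition interior_profile :: "nat \<Rightarrow> nat \<Rightarrow> (nat \<Rightarrow> nat \<Rightarrow> real) \<Rightarrow> bool" where
  "interior_profile K A p \<longleftrightarrow> (\<forall>k\<in>{1..K}. \<forall>a\<in>{1..A}. 0 < p k a)"

definition converges_to ::
  "nat \<Rightarrow> nat \<Rightarrow> (real \<Rightarrow> nat \<Rightarrow> nat \<Rightarrow> real) \<Rightarrow> (nat \<Rightarrow> nat \<Rightarrow> real) \<Rightarrow> bool" where
  "converges_to K A p q \<longleftrightarrow>
     (\<forall>k\<in>{1..K}. \<forall>a\<in>{1..A}. ((\<lambda>t. p t k a) \<longlongrightarrow> q k a) at_top)"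

end

theory Submission
  imports Defs
begin

text \<open>The game is an exact potential game: every payoff equals the concave potential
  \<open>\<Phi>(p) = \<Sum>\<^sub>\<alpha> b\<^sub>\<alpha> ln(\<sigma>\<^sub>\<alpha>\<^sup>2 + \<Sum>\<^sub>\<ell> g\<^sub>\<ell>\<^sub>\<alpha> p\<^sub>\<ell>\<^sub>\<alpha>)\<close> minus a term not depending on the
  user's own strategy, and \<open>v\<^sub>k\<^sub>\<alpha>\<close> is the gradient of \<open>\<Phi>\<close>, so maximisers of \<open>\<Phi>\<close> are Nash
  equilibria. For a maximiser \<open>q\<close>, along a replicator orbit
  \<open>d/dt H\<^sub>q(p) = \<langle>p - q, \<nabla>\<Phi>(p)\<rangle> \<le> \<Phi>(p) - \<Phi>(q) \<le> 0\<close> by concavity, so the KL divergence is a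
  Lyapunov function. As it stays nonnegative, \<open>\<Phi>(p(t))\<close> comes arbitrarily close to \<open>max \<Phi>\<close> at
  arbitrarily late times, and compactness of \<open>\<Delta>\<close> yields a maximiser \<open>r\<close> that is a limit point
  of the orbit. Then \<open>H\<^sub>r(p(t))\<close> is nonincreasing and tends to 0 along a sequence of times,
  hence tends to 0; it dominates the squared Hellinger distance, so \<open>p(t) \<rightarrow> r\<close>.\<close>

lemma deriv_nonneg_imp_mono_within:
  fixes f f' :: "real \<Rightarrow> real"
  assumes "x \<le> y" and sub: "{x..y} \<subseteq> S"
    and deriv: "\<And>t. t \<in> {x..y} \<Longrightarrow> (f has_real_derivative f' t) (at t within S)"
    and nonneg: "\<And>t. t \<in> {x..y} \<Longrightarrow> 0 \<le> f' t"
  shows "f x \<le> f y"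
proof (rule DERIV_nonneg_imp_increasing_open[OF \<open>x \<le> y\<close>])
  fix z assume z: "x < z" "z < y"
  then have "z \<in> interior {x..y}" by simp
  then have "at z within S = at z"
    using interior_mono[OF sub] by (intro at_within_interior) auto
  then show "\<exists>l. (f has_real_derivative l) (at z) \<and> 0 \<le> l"
    using deriv[of z] nonneg[of z] z by auto
next
  show "continuous_on {x..y} f"
    unfolding continuous_on_eq_continuous_within
  proof
    fix t assume "t \<in> {x..y}"
    then have "continuous (at t within S) f" using deriv by (intro DERIV_continuous)
    then show "continuous (at t within {x..y}) f" using sub by (rule continuous_within_subset)
  qed
qed

lemma bounded_finite_family_convergent_subseq:
  fixes x :: "nat \<Rightarrow> 'i \<Rightarrow> real"
  assumes "finite I" and "\<And>n i. i \<in> I \<Longrightarrow> \<bar>x n i\<bar> \<le> B"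
  shows "\<exists>r l. strict_mono r \<and> (\<forall>i\<in>I. (\<lambda>n. x (r n) i) \<longlonglongrightarrow> l i)"
  using assms
proof (induction I rule: finite_induct)
  case empty
  show ?case by (rule exI[of _ id]) (auto simp: strict_mono_def)
next
  case (insert j I)
  then obtain r l where r: "strict_mono r" "\<forall>i\<in>I. (\<lambda>n. x (r n) i) \<longlonglongrightarrow> l i" by auto
  have "bounded (range (\<lambda>n. x (r n) j))"
    unfolding bounded_iff using insert.prems by auto
  then obtain l' r' where r': "strict_mono r'" "((\<lambda>n. x (r n) j) \<circ> r') \<longlonglongrightarrow> l'"
    using bounded_imp_convergent_subsequence by blast
  show ?case
  proof (intro exI conjI ballI)
    show "strict_mono (r \<circ> r')" using r r' by (simp add: strict_mono_o)
    fix i assume i: "i \<in> insert j I"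
    show "(\<lambda>n. x ((r \<circ> r') n) i) \<longlonglongrightarrow> (l(j := l')) i"
    proof (cases "i = j")
      case True
      then show ?thesis using r' by (simp add: o_def)
    next
      case False
      then have "((\<lambda>n. x (r n) i) \<circ> r') \<longlonglongrightarrow> l i"
        using i r r' LIMSEQ_subseq_LIMSEQ by auto
      then show ?thesis using False by (simp add: o_def)
    qed
  qed
qed

lemma sqrt_diff_sq_le_kl_term:
  fixes q p :: real
  assumes q: "0 < q" and p: "0 < p"
  shows "(sqrt q - sqrt p)\<^sup>2 + (q - p) \<le> q * (ln q - ln p)"
proof -
  define u v where "u = sqrt q" and "v = sqrt p"
  have u: "0 < u" and v: "0 < v" using q p by (simp_all add: u_def v_def)
  have qu: "q = u * u" and pv: "p = v * v" using q p by (simp_all add: u_def v_def)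
  have "u * (ln v - ln u) \<le> v - u"
    using ln_diff_le[OF v u] u by (simp add: field_simps)
  then have "u * (u * (ln v - ln u)) \<le> u * (v - u)"
    using u by (intro mult_left_mono) auto
  then show ?thesis
    using u v by (simp add: qu pv ln_mult power2_eq_square algebra_simps)
qed

locale mac_game =
  fixes K A :: nat and P b s :: "nat \<Rightarrow> real" and g :: "nat \<Rightarrow> nat \<Rightarrow> real"
  assumes P_pos: "\<forall>k\<in>{1..K}. 0 < P k"
    and b_pos: "\<forall>a\<in>{1..A}. 0 < b a"
    and s_pos: "\<forall>a\<in>{1..A}. 0 < s a"
    and g_pos: "\<forall>k\<in>{1..K}. \<forall>a\<in>{1..A}. 0 < g k a"
begin

definition received :: "(nat \<Rightarrow> nat \<Rightarrow> real) \<Rightarrow> nat \<Rightarrow> real" where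
  "received p a = s a + (\<Sum>l=1..K. g l a * p l a)"

definition interference :: "(nat \<Rightarrow> nat \<Rightarrow> real) \<Rightarrow> nat \<Rightarrow> nat \<Rightarrow> real" where
  "interference p k a = s a + (\<Sum>l\<in>{1..K} - {k}. g l a * p l a)"

definition potential :: "(nat \<Rightarrow> nat \<Rightarrow> real) \<Rightarrow> real" where
  "potential p = (\<Sum>a=1..A. b a * ln (received p a))"

definition potential_max :: "(nat \<Rightarrow> nat \<Rightarrow> real) \<Rightarrow> bool" where
  "potential_max q \<longleftrightarrow> in_Delta K A P q \<and> (\<forall>r. in_Delta K A P r \<longrightarrow> potential r \<le> potential q)"

definition kl_div :: "(nat \<Rightarrow> nat \<Rightarrow> real) \<Rightarrow> (nat \<Rightarrow> nat \<Rightarrow> real) \<Rightarrow> real" where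
  "kl_div q p =
     (\<Sum>k=1..K. \<Sum>a=1..A. if 0 < q k a then q k a * (ln (q k a) - ln (p k a)) else 0)"

abbreviation growth :: "(nat \<Rightarrow> nat \<Rightarrow> real) \<Rightarrow> nat \<Rightarrow> nat \<Rightarrow> real" where
  "growth p k a \<equiv> vel K b s g p k a - vel_avg K A P b s g p k"

subsection \<open>Profiles and the potential\<close>

lemma in_Delta_nonneg: "in_Delta K A P p \<Longrightarrow> k \<in> {1..K} \<Longrightarrow> a \<in> {1..A} \<Longrightarrow> 0 \<le> p k a"
  by (auto simp: in_Delta_def strat_k_def)

lemma in_Delta_sum: "in_Delta K A P p \<Longrightarrow> k \<in> {1..K} \<Longrightarrow> (\<Sum>a=1..A. p k a) = P k"
  by (auto simp: in_Delta_def strat_k_def)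

lemma in_Delta_le:
  assumes "in_Delta K A P p" "k \<in> {1..K}" "a \<in> {1..A}"
  shows "p k a \<le> P k"
proof -
  have "p k a \<le> (\<Sum>a=1..A. p k a)"
    by (rule member_le_sum) (use assms in_Delta_nonneg in auto)
  then show ?thesis using in_Delta_sum assms by simp
qed

lemma in_Delta_limit:
  assumes x: "\<And>n. in_Delta K A P (x n)"
    and conv: "\<forall>k\<in>{1..K}. \<forall>a\<in>{1..A}. (\<lambda>n. x n k a) \<longlonglongrightarrow> q k a"
  shows "in_Delta K A P q"
  unfolding in_Delta_def strat_k_def
proof (intro ballI conjI)
  fix k a assume k: "k \<in> {1..K}" and a: "a \<in> {1..A}"
  show "0 \<le> q k a"
    by (rule LIMSEQ_le_const[of "\<lambda>n. x n k a"]) (use conv k a in_Delta_nonneg[OF x k a] in auto)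
next
  fix k assume k: "k \<in> {1..K}"
  have "(\<lambda>n. \<Sum>a=1..A. x n k a) \<longlonglongrightarrow> (\<Sum>a=1..A. q k a)"
    using conv k by (auto intro!: tendsto_sum)
  then show "(\<Sum>a=1..A. q k a) = P k"
    using in_Delta_sum[OF x k] by (simp add: LIMSEQ_const_iff)
qed

lemma received_ge_noise:
  assumes p: "in_Delta K A P p" and a: "a \<in> {1..A}"
  shows "s a \<le> received p a"
proof -
  have "0 \<le> g l a * p l a" if "l \<in> {1..K}" for l
    using g_pos in_Delta_nonneg[OF p that a] that a by (simp add: less_imp_le)
  then have "0 \<le> (\<Sum>l=1..K. g l a * p l a)" by (intro sum_nonneg)
  then show ?thesis by (simp add: received_def)
qed

lemma received_pos: "in_Delta K A P p \<Longrightarrow> a \<in> {1..A} \<Longrightarrow> 0 < received p a"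
  using received_ge_noise s_pos by (meson less_le_trans)

lemma vel_eq_received: "vel K b s g p k a = b a * g k a / received p a"
  by (simp add: vel_def received_def)

lemma interference_pos:
  assumes p: "in_Delta K A P p" and a: "a \<in> {1..A}"
  shows "0 < interference p k a"
proof -
  have "0 \<le> g l a * p l a" if "l \<in> {1..K} - {k}" for l
    using g_pos in_Delta_nonneg[OF p _ a] that a by (simp add: less_imp_le)
  then have "0 \<le> (\<Sum>l\<in>{1..K} - {k}. g l a * p l a)" by (intro sum_nonneg)
  then show ?thesis using s_pos a by (simp add: interference_def add_pos_nonneg)
qed

lemma received_eq_interference:
  "k \<in> {1..K} \<Longrightarrow> received p a = interference p k a + g k a * p k a"
  by (simp add: received_def interference_def sum.remove)

text \<open>The exact potential property: the second sum does not depend on user \<open>k\<close>'s strategy.\<close>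

lemma payoff_eq_potential:
  assumes p: "in_Delta K A P p" and k: "k \<in> {1..K}"
  shows "payoff K A b s g p k = potential p - (\<Sum>a=1..A. b a * ln (interference p k a))"
proof -
  have "ln (1 + g k a * p k a / interference p k a) = ln (received p a) - ln (interference p k a)"
    if a: "a \<in> {1..A}" for a
  proof -
    have "1 + g k a * p k a / interference p k a = received p a / interference p k a"
      using interference_pos[OF p a, of k] received_eq_interference[OF k, of p a]
      by (simp add: field_simps)
    then show ?thesis
      using interference_pos[OF p a, of k] received_pos[OF p a] by (simp add: ln_div)
  qed
  then have "payoff K A b s g p k = (\<Sum>a=1..A. b a * (ln (received p a) - ln (interference p k a)))"
    unfolding payoff_def interference_def[symmetric] by (auto intro!: sum.cong)
  then show ?thesis
    by (simp add: potential_def right_diff_distrib sum_subtractf)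
qed

lemma potential_max_imp_nash:
  assumes q: "potential_max q"
  shows "nash_eq K A P b s g q"
  unfolding nash_eq_def
proof (intro conjI ballI allI impI)
  show qD: "in_Delta K A P q" using q by (simp add: potential_max_def)
  fix k r assume k: "k \<in> {1..K}" and r: "strat_k A r (P k)"
  have qD': "in_Delta K A P (q(k := r))" using qD r by (auto simp: in_Delta_def)
  have "interference (q(k := r)) k = interference q k"
    by (auto simp: interference_def intro!: sum.cong)
  moreover have "potential (q(k := r)) \<le> potential q"
    using q qD' by (simp add: potential_max_def)
  ultimately show "payoff K A b s g (q(k := r)) k \<le> payoff K A b s g q k"
    using payoff_eq_potential[OF qD k] payoff_eq_potential[OF qD' k] by simp
qed

lemma potential_le_linearization:
  assumes q: "in_Delta K A P q" and p: "in_Delta K A P p"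
  shows "potential q - potential p \<le> (\<Sum>k=1..K. \<Sum>a=1..A. (q k a - p k a) * vel K b s g p k a)"
proof -
  have "potential q - potential p = (\<Sum>a=1..A. b a * (ln (received q a) - ln (received p a)))"
    by (simp add: potential_def sum_subtractf right_diff_distrib)
  also have "\<dots> \<le> (\<Sum>a=1..A. b a * ((received q a - received p a) / received p a))"
  proof (rule sum_mono)
    fix a assume a: "a \<in> {1..A}"
    have "ln (received q a) - ln (received p a) \<le> (received q a - received p a) / received p a"
      using received_pos q p a by (intro ln_diff_le) auto
    then show "b a * (ln (received q a) - ln (received p a))
        \<le> b a * ((received q a - received p a) / received p a)"
      using b_pos a by (intro mult_left_mono) (auto intro: less_imp_le)
  qed
  also have "\<dots> = (\<Sum>a=1..A. \<Sum>k=1..K. (q k a - p k a) * vel K b s g p k a)"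
  proof (rule sum.cong[OF refl])
    fix a
    have "received q a - received p a = (\<Sum>l=1..K. g l a * (q l a - p l a))"
      by (simp add: received_def sum_subtractf right_diff_distrib)
    then show "b a * ((received q a - received p a) / received p a)
        = (\<Sum>k=1..K. (q k a - p k a) * vel K b s g p k a)"
      by (simp add: vel_eq_received sum_distrib_right sum_divide_distrib sum_distrib_left mult_ac)
  qed
  also have "\<dots> = (\<Sum>k=1..K. \<Sum>a=1..A. (q k a - p k a) * vel K b s g p k a)"
    by (rule sum.swap)
  finally show ?thesis .
qed

lemma potential_tendsto:
  assumes r: "in_Delta K A P r" and x: "\<forall>k\<in>{1..K}. \<forall>a\<in>{1..A}. (\<lambda>n. x n k a) \<longlonglongrightarrow> r k a"
  shows "(\<lambda>n. potential (x n)) \<longlonglongrightarrow> potential r"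
  unfolding potential_def
proof (intro tendsto_sum tendsto_mult tendsto_const)
  fix a assume a: "a \<in> {1..A}"
  have "(\<lambda>n. received (x n) a) \<longlonglongrightarrow> received r a"
    unfolding received_def using x a by (auto intro!: tendsto_intros)
  then show "(\<lambda>n. ln (received (x n) a)) \<longlonglongrightarrow> ln (received r a)"
    using received_pos[OF r a] by (intro tendsto_ln) auto
qed

lemma potential_cong:
  "\<forall>k\<in>{1..K}. \<forall>a\<in>{1..A}. q' k a = q k a \<Longrightarrow> potential q' = potential q"
  unfolding potential_def received_def by (intro sum.cong refl) auto

lemma maximizing_seq_has_maximizer_limit:
  assumes x: "\<And>n. in_Delta K A P (x n)" and M: "\<And>r. in_Delta K A P r \<Longrightarrow> potential r \<le> M"
    and near: "\<And>n. M - inverse (real (Suc n)) < potential (x n)"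
  shows "\<exists>rr q. strict_mono rr \<and> potential_max q \<and>
     (\<forall>k\<in>{1..K}. \<forall>a\<in>{1..A}. (\<lambda>n. x (rr n) k a) \<longlonglongrightarrow> q k a)"
proof -
  have "\<bar>x n k a\<bar> \<le> (\<Sum>l=1..K. P l)" if "k \<in> {1..K}" "a \<in> {1..A}" for n k a
  proof -
    have "P k \<le> (\<Sum>l=1..K. P l)"
      by (rule member_le_sum) (use that P_pos in \<open>auto intro: less_imp_le\<close>)
    then show ?thesis using in_Delta_nonneg[OF x that, of n] in_Delta_le[OF x that, of n] by simp
  qed
  then obtain rr l where rr: "strict_mono rr"
    and l: "\<forall>i\<in>{1..K} \<times> {1..A}. (\<lambda>n. x (rr n) (fst i) (snd i)) \<longlonglongrightarrow> l i"
    using bounded_finite_family_convergent_subseq[of "{1..K} \<times> {1..A}" "\<lambda>n i. x n (fst i) (snd i)"]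
    by fastforce
  define q where "q k a = l (k, a)" for k a
  have conv: "\<forall>k\<in>{1..K}. \<forall>a\<in>{1..A}. (\<lambda>n. x (rr n) k a) \<longlonglongrightarrow> q k a"
    using l by (auto simp: q_def)
  have qD: "in_Delta K A P q"
    using in_Delta_limit[of "\<lambda>n. x (rr n)"] x conv by blast
  have "(\<lambda>n. M - inverse (real (Suc (rr n)))) \<longlonglongrightarrow> M - 0"
    using LIMSEQ_subseq_LIMSEQ[OF LIMSEQ_inverse_real_of_nat rr]
    by (intro tendsto_diff tendsto_const) (simp add: o_def)
  moreover have "M - inverse (real (Suc (rr n))) \<le> potential (x (rr n))" for n
    using near[of "rr n"] by simp
  ultimately have "M \<le> potential q"
    using potential_tendsto[OF qD conv] by (auto intro: LIMSEQ_le)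
  then have "potential_max q" using qD M by (auto simp: potential_max_def intro: order_trans)
  then show ?thesis using rr conv by blast
qed

lemma potential_max_exists:
  assumes "in_Delta K A P p"
  shows "\<exists>q. potential_max q"
proof -
  define U where "U = (\<Sum>a=1..A. b a * ln (s a + (\<Sum>l=1..K. g l a * P l)))"
  have U: "potential r \<le> U" if r: "in_Delta K A P r" for r
    unfolding potential_def U_def
  proof (rule sum_mono)
    fix a assume a: "a \<in> {1..A}"
    have "g l a * r l a \<le> g l a * P l" if l: "l \<in> {1..K}" for l
      using g_pos in_Delta_le[OF r l a] l a by (intro mult_left_mono) (auto intro: less_imp_le)
    then have "received r a \<le> s a + (\<Sum>l=1..K. g l a * P l)"
      unfolding received_def by (auto intro!: sum_mono)
    then show "b a * ln (received r a) \<le> b a * ln (s a + (\<Sum>l=1..K. g l a * P l))"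
      using received_pos[OF r a] b_pos a by (intro mult_left_mono) (auto intro: less_imp_le)
  qed
  define M where "M = Sup (potential ` {r. in_Delta K A P r})"
  have bdd: "bdd_above (potential ` {r. in_Delta K A P r})" using U by (auto intro!: bdd_aboveI)
  have M: "potential r \<le> M" if "in_Delta K A P r" for r
    unfolding M_def using bdd that by (auto intro!: cSup_upper)
  have "\<exists>r. in_Delta K A P r \<and> M - inverse (real (Suc n)) < potential r" for n
    using less_cSup_iff[OF _ bdd, of "M - inverse (real (Suc n))"] assms
    by (auto simp: M_def)
  then obtain x where "\<And>n. in_Delta K A P (x n)" "\<And>n. M - inverse (real (Suc n)) < potential (x n)"
    by metis
  from maximizing_seq_has_maximizer_limit[OF this(1) M this(2)] show ?thesis by blast
qed

lemma unique_nash_imp_potential_max: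
  assumes q: "nash_eq K A P b s g q"
    and unique: "\<And>q'. nash_eq K A P b s g q' \<Longrightarrow> \<forall>k\<in>{1..K}. \<forall>a\<in>{1..A}. q' k a = q k a"
  shows "potential_max q"
proof -
  have qD: "in_Delta K A P q" using q by (simp add: nash_eq_def)
  obtain m where m: "potential_max m" using potential_max_exists[OF qD] ..
  have "potential m = potential q"
    using potential_cong unique[OF potential_max_imp_nash[OF m]] by blast
  then show ?thesis using m qD by (simp add: potential_max_def)
qed

subsection \<open>The Kullback--Leibler divergence\<close>

lemma hellinger_le_kl_div:
  assumes q: "in_Delta K A P q" and r: "in_Delta K A P r" and qr: "KL_finite K A q r"
  shows "(\<Sum>k=1..K. \<Sum>a=1..A. (sqrt (q k a) - sqrt (r k a))\<^sup>2) \<le> kl_div q r"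
proof -
  have "(\<Sum>k=1..K. \<Sum>a=1..A. (sqrt (q k a) - sqrt (r k a))\<^sup>2 + (q k a - r k a)) \<le> kl_div q r"
    unfolding kl_div_def
  proof (intro sum_mono)
    fix k a assume k: "k \<in> {1..K}" and a: "a \<in> {1..A}"
    show "(sqrt (q k a) - sqrt (r k a))\<^sup>2 + (q k a - r k a)
        \<le> (if 0 < q k a then q k a * (ln (q k a) - ln (r k a)) else 0)"
      using qr k a in_Delta_nonneg[OF q k a] in_Delta_nonneg[OF r k a]
      by (auto simp: KL_finite_def intro: sqrt_diff_sq_le_kl_term)
  qed
  moreover have "(\<Sum>a=1..A. q k a - r k a) = 0" if "k \<in> {1..K}" for k
    using in_Delta_sum[OF q that] in_Delta_sum[OF r that] by (simp add: sum_subtractf)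
  ultimately show ?thesis by (simp add: sum.distrib)
qed

lemma sqrt_dist_le_kl_div:
  assumes q: "in_Delta K A P q" and r: "in_Delta K A P r" and qr: "KL_finite K A q r"
    and k: "k \<in> {1..K}" and a: "a \<in> {1..A}"
  shows "(sqrt (q k a) - sqrt (r k a))\<^sup>2 \<le> kl_div q r"
proof -
  have "(sqrt (q k a) - sqrt (r k a))\<^sup>2 \<le> (\<Sum>a=1..A. (sqrt (q k a) - sqrt (r k a))\<^sup>2)"
    by (rule member_le_sum) (use a in auto)
  also have "\<dots> \<le> (\<Sum>k=1..K. \<Sum>a=1..A. (sqrt (q k a) - sqrt (r k a))\<^sup>2)"
    by (rule member_le_sum[where f = "\<lambda>k. \<Sum>a=1..A. (sqrt (q k a) - sqrt (r k a))\<^sup>2"])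
      (use k in \<open>auto intro: sum_nonneg\<close>)
  finally show ?thesis using hellinger_le_kl_div[OF q r qr] by linarith
qed

lemma kl_div_nonneg:
  "in_Delta K A P q \<Longrightarrow> in_Delta K A P r \<Longrightarrow> KL_finite K A q r \<Longrightarrow> 0 \<le> kl_div q r"
  using hellinger_le_kl_div by (meson order_trans sum_nonneg zero_le_power2)

lemma kl_div_tendsto_zero:
  assumes x: "\<forall>k\<in>{1..K}. \<forall>a\<in>{1..A}. (\<lambda>n. x n k a) \<longlonglongrightarrow> q k a"
  shows "(\<lambda>n. kl_div q (x n)) \<longlonglongrightarrow> 0"
proof -
  have "(\<lambda>n. kl_div q (x n)) \<longlonglongrightarrow> (\<Sum>k=1..K. \<Sum>a=1..A. (0::real))"
    unfolding kl_div_def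
  proof (intro tendsto_sum)
    fix k a assume k: "k \<in> {1..K}" and a: "a \<in> {1..A}"
    show "(\<lambda>n. if 0 < q k a then q k a * (ln (q k a) - ln (x n k a)) else 0) \<longlonglongrightarrow> 0"
    proof (cases "0 < q k a")
      case True
      have "(\<lambda>n. q k a * (ln (q k a) - ln (x n k a))) \<longlonglongrightarrow> q k a * (ln (q k a) - ln (q k a))"
        using True x k a by (intro tendsto_intros tendsto_ln) auto
      then show ?thesis using True by simp
    qed simp
  qed
  then show ?thesis by simp
qed

lemma tendsto_of_kl_div_tendsto_zero:
  assumes q: "in_Delta K A P q"
    and x: "\<forall>\<^sub>F t in F. in_Delta K A P (x t) \<and> KL_finite K A q (x t)"
    and kl: "((\<lambda>t. kl_div q (x t)) \<longlongrightarrow> 0) F"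
    and k: "k \<in> {1..K}" and a: "a \<in> {1..A}"
  shows "((\<lambda>t. x t k a) \<longlongrightarrow> q k a) F"
proof -
  have "((\<lambda>t. (sqrt (q k a) - sqrt (x t k a))\<^sup>2) \<longlongrightarrow> 0) F"
  proof (rule tendsto_sandwich[OF _ _ tendsto_const kl])
    show "\<forall>\<^sub>F t in F. (sqrt (q k a) - sqrt (x t k a))\<^sup>2 \<le> kl_div q (x t)"
      using x by eventually_elim (use sqrt_dist_le_kl_div[OF q _ _ k a] in auto)
  qed simp
  then have "((\<lambda>t. sqrt ((sqrt (x t k a) - sqrt (q k a))\<^sup>2)) \<longlongrightarrow> sqrt 0) F"
    by (intro tendsto_real_sqrt) (simp add: power2_commute)
  then have "((\<lambda>t. sqrt (x t k a)) \<longlongrightarrow> sqrt (q k a)) F"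
    by (simp add: tendsto_rabs_zero_iff LIM_zero_iff)
  then have "((\<lambda>t. (sqrt (x t k a))\<^sup>2) \<longlongrightarrow> (sqrt (q k a))\<^sup>2) F"
    by (rule tendsto_power)
  moreover have "\<forall>\<^sub>F t in F. (sqrt (x t k a))\<^sup>2 = x t k a"
    using x by eventually_elim (use in_Delta_nonneg[OF _ k a] in auto)
  ultimately show ?thesis
    using in_Delta_nonneg[OF q k a] by (simp add: tendsto_cong)
qed

subsection \<open>Replicator orbits\<close>

lemma vel_nonneg:
  "in_Delta K A P p \<Longrightarrow> k \<in> {1..K} \<Longrightarrow> a \<in> {1..A} \<Longrightarrow> 0 \<le> vel K b s g p k a"
  using received_pos[of p a] b_pos g_pos
  by (auto simp: vel_eq_received intro!: divide_nonneg_pos mult_nonneg_nonneg less_imp_le)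

lemma vel_avg_le:
  assumes p: "in_Delta K A P p" and k: "k \<in> {1..K}"
  shows "vel_avg K A P b s g p k \<le> (\<Sum>c=1..A. b c * g k c / s c)"
proof -
  have term_le: "p k c * vel K b s g p k c \<le> P k * (b c * g k c / s c)" if c: "c \<in> {1..A}" for c
  proof -
    have "vel K b s g p k c \<le> b c * g k c / s c"
      unfolding vel_eq_received
      using received_ge_noise[OF p c] received_pos[OF p c] s_pos b_pos g_pos c k
      by (intro divide_left_mono mult_nonneg_nonneg) (auto intro: less_imp_le mult_pos_pos)
    then show ?thesis
      using in_Delta_le[OF p k c] in_Delta_nonneg[OF p k c] vel_nonneg[OF p k c] P_pos k
      by (intro mult_mono) auto
  qed
  have "(\<Sum>c=1..A. p k c * vel K b s g p k c) \<le> (\<Sum>c=1..A. P k * (b c * g k c / s c))"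
    by (rule sum_mono[OF term_le])
  also have "\<dots> = P k * (\<Sum>c=1..A. b c * g k c / s c)"
    by (rule sum_distrib_left[symmetric])
  finally show ?thesis
    using P_pos k by (simp add: vel_avg_def divide_le_eq mult.commute)
qed

lemma replicator_in_Delta:
  "replicator_solution K A P b s g p \<Longrightarrow> 0 \<le> t \<Longrightarrow> in_Delta K A P (p t)"
  by (simp add: replicator_solution_def)

lemma replicator_has_derivative:
  "replicator_solution K A P b s g p \<Longrightarrow> 0 \<le> t \<Longrightarrow> k \<in> {1..K} \<Longrightarrow> a \<in> {1..A} \<Longrightarrow>
   ((\<lambda>\<tau>. p \<tau> k a) has_real_derivative p t k a * growth (p t) k a) (at t within {0..})"
  by (simp add: replicator_solution_def)

text \<open>The growth rates are bounded below by \<open>-C\<close>, so \<open>p\<^sub>k\<^sub>\<alpha>(t) e\<^sup>C\<^sup>t\<close> is nondecreasing.\<close>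

lemma replicator_pos:
  assumes sol: "replicator_solution K A P b s g p" and k: "k \<in> {1..K}" and a: "a \<in> {1..A}"
    and p0: "0 < p 0 k a" and t: "0 \<le> t"
  shows "0 < p t k a"
proof -
  define C where "C = (\<Sum>c=1..A. b c * g k c / s c)"
  have "p 0 k a * exp (C * 0) \<le> p t k a * exp (C * t)"
  proof (rule deriv_nonneg_imp_mono_within[OF t, of "{0..}"])
    fix \<tau> :: real assume "\<tau> \<in> {0..t}"
    then have \<tau>: "0 \<le> \<tau>" by simp
    show "((\<lambda>\<tau>. p \<tau> k a * exp (C * \<tau>)) has_real_derivative
        p \<tau> k a * growth (p \<tau>) k a * exp (C * \<tau>) + p \<tau> k a * (exp (C * \<tau>) * C)) (at \<tau> within {0..})"
      by (auto intro!: derivative_eq_intros replicator_has_derivative[OF sol \<tau> k a])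
    have pD: "in_Delta K A P (p \<tau>)" using replicator_in_Delta[OF sol \<tau>] .
    have "0 \<le> growth (p \<tau>) k a + C"
      using vel_avg_le[OF pD k] vel_nonneg[OF pD k a] by (simp add: C_def)
    then have "0 \<le> p \<tau> k a * exp (C * \<tau>) * (growth (p \<tau>) k a + C)"
      using in_Delta_nonneg[OF pD k a] by simp
    then show "0 \<le> p \<tau> k a * growth (p \<tau>) k a * exp (C * \<tau>) + p \<tau> k a * (exp (C * \<tau>) * C)"
      by (simp add: algebra_simps)
  qed auto
  then have "0 < p t k a * exp (C * t)" using p0 by simp
  then show ?thesis by (simp add: zero_less_mult_iff)
qed

lemma replicator_KL_finite:
  "replicator_solution K A P b s g p \<Longrightarrow> KL_finite K A q (p 0) \<Longrightarrow> 0 \<le> t \<Longrightarrow> KL_finite K A q (p t)"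
  using replicator_pos unfolding KL_finite_def by blast

lemma weighted_growth_sum:
  assumes q: "in_Delta K A P q"
  shows "(\<Sum>k=1..K. \<Sum>a=1..A. q k a * growth r k a)
       = (\<Sum>k=1..K. \<Sum>a=1..A. (q k a - r k a) * vel K b s g r k a)"
proof (rule sum.cong[OF refl])
  fix k assume k: "k \<in> {1..K}"
  have "(\<Sum>a=1..A. q k a * growth r k a)
      = (\<Sum>a=1..A. q k a * vel K b s g r k a) - (\<Sum>a=1..A. q k a) * vel_avg K A P b s g r k"
    by (simp add: right_diff_distrib sum_subtractf sum_distrib_right)
  also have "\<dots> = (\<Sum>a=1..A. q k a * vel K b s g r k a) - (\<Sum>a=1..A. r k a * vel K b s g r k a)"
    using in_Delta_sum[OF q k] P_pos k by (simp add: vel_avg_def less_imp_neq[symmetric])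
  finally show "(\<Sum>a=1..A. q k a * growth r k a) = (\<Sum>a=1..A. (q k a - r k a) * vel K b s g r k a)"
    by (simp add: left_diff_distrib sum_subtractf)
qed

lemma kl_div_has_derivative:
  assumes sol: "replicator_solution K A P b s g p" and q: "in_Delta K A P q"
    and KL: "KL_finite K A q (p 0)" and t: "0 \<le> t"
  shows "((\<lambda>\<tau>. kl_div q (p \<tau>)) has_real_derivative
      - (\<Sum>k=1..K. \<Sum>a=1..A. q k a * growth (p t) k a)) (at t within {0..})"
  unfolding kl_div_def sum_negf[symmetric]
proof (intro DERIV_sum)
  fix k a assume k: "k \<in> {1..K}" and a: "a \<in> {1..A}"
  show "((\<lambda>\<tau>. if 0 < q k a then q k a * (ln (q k a) - ln (p \<tau> k a)) else 0) has_real_derivative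
          - (q k a * growth (p t) k a)) (at t within {0..})"
  proof (cases "0 < q k a")
    case True
    then have "0 < p t k a" using replicator_KL_finite[OF sol KL t] k a by (auto simp: KL_finite_def)
    then show ?thesis
      using True
      by (auto intro!: derivative_eq_intros replicator_has_derivative[OF sol t k a]
          simp: algebra_simps)
  next
    case False
    then show ?thesis using in_Delta_nonneg[OF q k a] by simp
  qed
qed

lemma kl_div_deriv_le_potential_gap:
  assumes q: "in_Delta K A P q" and r: "in_Delta K A P r"
  shows "- (\<Sum>k=1..K. \<Sum>a=1..A. q k a * growth r k a) \<le> potential r - potential q"
  using weighted_growth_sum[OF q, of r] potential_le_linearization[OF q r] by linarith

lemma replicator_kl_div_antimono:
  assumes sol: "replicator_solution K A P b s g p" and q: "potential_max q"
    and KL: "KL_finite K A q (p 0)" and "0 \<le> x" "x \<le> y"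
  shows "kl_div q (p y) \<le> kl_div q (p x)"
proof -
  have qD: "in_Delta K A P q" using q by (simp add: potential_max_def)
  have "- kl_div q (p x) \<le> - kl_div q (p y)"
  proof (rule deriv_nonneg_imp_mono_within[OF \<open>x \<le> y\<close>, of "{0..}"])
    fix t assume "t \<in> {x..y}"
    then have t: "0 \<le> t" using \<open>0 \<le> x\<close> by simp
    show "((\<lambda>\<tau>. - kl_div q (p \<tau>)) has_real_derivative
        (\<Sum>k=1..K. \<Sum>a=1..A. q k a * growth (p t) k a)) (at t within {0..})"
      using DERIV_minus[OF kl_div_has_derivative[OF sol qD KL t]] by simp
    show "0 \<le> (\<Sum>k=1..K. \<Sum>a=1..A. q k a * growth (p t) k a)"
      using kl_div_deriv_le_potential_gap[OF qD replicator_in_Delta[OF sol t]]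
        q replicator_in_Delta[OF sol t] by (auto simp: potential_max_def)
  qed (use \<open>0 \<le> x\<close> in auto)
  then show ?thesis by simp
qed

text \<open>If \<open>\<Phi>(p(t)) \<le> max \<Phi> - d\<close> on \<open>[n, \<infinity>)\<close>, then \<open>H\<^sub>q(p(t)) + d t\<close> is nonincreasing there,
  which contradicts \<open>H\<^sub>q \<ge> 0\<close> at \<open>t = n + H\<^sub>q(p(n))/d + 1\<close>.\<close>

lemma replicator_potential_near_max:
  assumes sol: "replicator_solution K A P b s g p" and q: "potential_max q"
    and KL: "KL_finite K A q (p 0)"
  shows "\<exists>t\<ge>real n. potential q - inverse (real (Suc n)) < potential (p t)"
proof (rule ccontr)
  assume contra: "\<not> ?thesis"
  define d where "d = inverse (real (Suc n))"
  have d: "0 < d" by (simp add: d_def)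
  have far: "potential (p t) \<le> potential q - d" if "real n \<le> t" for t
    using contra that by (auto simp: d_def not_less)
  have qD: "in_Delta K A P q" using q by (simp add: potential_max_def)
  have kl_nonneg: "0 \<le> kl_div q (p t)" if "0 \<le> t" for t
    using kl_div_nonneg[OF qD replicator_in_Delta[OF sol that] replicator_KL_finite[OF sol KL that]] .
  define y where "y = real n + kl_div q (p (real n)) / d + 1"
  have ny: "real n \<le> y" using kl_nonneg[of "real n"] d by (simp add: y_def)
  have "- (kl_div q (p (real n)) + d * real n) \<le> - (kl_div q (p y) + d * y)"
  proof (rule deriv_nonneg_imp_mono_within[OF ny, of "{0..}"])
    fix t assume "t \<in> {real n..y}"
    then have t: "0 \<le> t" "real n \<le> t" by auto
    show "((\<lambda>\<tau>. - (kl_div q (p \<tau>) + d * \<tau>)) has_real_derivative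
        (\<Sum>k=1..K. \<Sum>a=1..A. q k a * growth (p t) k a) - d) (at t within {0..})"
      using kl_div_has_derivative[OF sol qD KL t(1)] by (auto intro!: derivative_eq_intros)
    show "0 \<le> (\<Sum>k=1..K. \<Sum>a=1..A. q k a * growth (p t) k a) - d"
      using kl_div_deriv_le_potential_gap[OF qD replicator_in_Delta[OF sol t(1)]] far[OF t(2)]
      by linarith
  qed auto
  moreover have "d * y = d * real n + kl_div q (p (real n)) + d"
    using d by (simp add: y_def field_simps)
  ultimately show False
    using kl_nonneg[of y] ny d by linarith
qed

lemma replicator_limit_point_max:
  assumes sol: "replicator_solution K A P b s g p" and q: "potential_max q"
    and KL: "KL_finite K A q (p 0)"
  shows "\<exists>tt r. (\<forall>n. real n \<le> tt n) \<and> potential_max r \<and>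
     (\<forall>k\<in>{1..K}. \<forall>a\<in>{1..A}. (\<lambda>n. p (tt n) k a) \<longlonglongrightarrow> r k a)"
proof -
  obtain tt where tt: "\<And>n. real n \<le> tt n"
    and near: "\<And>n. potential q - inverse (real (Suc n)) < potential (p (tt n))"
    using replicator_potential_near_max[OF sol q KL] by metis
  have "in_Delta K A P (p (tt n))" for n
    using replicator_in_Delta[OF sol] tt[of n] by (meson of_nat_0_le_iff order_trans)
  moreover have "potential r \<le> potential q" if "in_Delta K A P r" for r
    using q that by (simp add: potential_max_def)
  ultimately obtain rr r where rr: "strict_mono rr" "potential_max r"
    "\<forall>k\<in>{1..K}. \<forall>a\<in>{1..A}. (\<lambda>n. p (tt (rr n)) k a) \<longlonglongrightarrow> r k a"
    using maximizing_seq_has_maximizer_limit[of "\<lambda>n. p (tt n)", OF _ _ near] by blast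
  have "real n \<le> tt (rr n)" for n
    using tt[of "rr n"] seq_suble[OF rr(1), of n] by (meson of_nat_le_iff order_trans)
  then show ?thesis using rr by (intro exI[of _ "\<lambda>n. tt (rr n)"] exI[of _ r]) auto
qed

lemma replicator_converges_to_limit_point_max:
  assumes sol: "replicator_solution K A P b s g p" and q: "potential_max q"
    and KL: "KL_finite K A q (p 0)" and tt: "\<And>n. real n \<le> tt n"
    and conv: "\<forall>k\<in>{1..K}. \<forall>a\<in>{1..A}. (\<lambda>n. p (tt n) k a) \<longlonglongrightarrow> q k a"
  shows "converges_to K A p q"
proof -
  have qD: "in_Delta K A P q" using q by (simp add: potential_max_def)
  have tt0: "0 \<le> tt n" for n using tt[of n] by (meson of_nat_0_le_iff order_trans)
  have kl_nonneg: "0 \<le> kl_div q (p t)" if "0 \<le> t" for t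
    using kl_div_nonneg[OF qD replicator_in_Delta[OF sol that] replicator_KL_finite[OF sol KL that]] .
  have kl_seq: "(\<lambda>n. kl_div q (p (tt n))) \<longlonglongrightarrow> 0" by (rule kl_div_tendsto_zero[OF conv])
  have "((\<lambda>t. kl_div q (p t)) \<longlongrightarrow> 0) at_top"
  proof (rule tendstoI)
    fix e :: real assume "0 < e"
    obtain N where "\<forall>n\<ge>N. norm (kl_div q (p (tt n)) - 0) < e"
      using LIMSEQ_D[OF kl_seq \<open>0 < e\<close>] ..
    then have N: "kl_div q (p (tt N)) < e" by auto
    have "kl_div q (p t) < e" if "tt N \<le> t" for t
      using replicator_kl_div_antimono[OF sol q KL tt0 that] N by simp
    then show "\<forall>\<^sub>F t in at_top. dist (kl_div q (p t)) 0 < e"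
      using kl_nonneg tt0[of N]
      by (auto simp: eventually_at_top_linorder intro!: exI[of _ "tt N"])
  qed
  moreover have "\<forall>\<^sub>F t in at_top. in_Delta K A P (p t) \<and> KL_finite K A q (p t)"
    using eventually_ge_at_top[of 0]
    by eventually_elim (use replicator_in_Delta[OF sol] replicator_KL_finite[OF sol KL] in auto)
  ultimately show ?thesis
    unfolding converges_to_def using tendsto_of_kl_div_tendsto_zero[OF qD] by blast
qed

lemma replicator_tendsto_unique_potential_max:
  assumes sol: "replicator_solution K A P b s g p" and q: "potential_max q"
    and unique: "\<And>r. potential_max r \<Longrightarrow> \<forall>k\<in>{1..K}. \<forall>a\<in>{1..A}. r k a = q k a"
    and KL: "KL_finite K A q (p 0)"
  shows "converges_to K A p q"
proof -
  obtain tt r where tt: "\<forall>n. real n \<le> tt n" and r: "potential_max r"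
    and conv: "\<forall>k\<in>{1..K}. \<forall>a\<in>{1..A}. (\<lambda>n. p (tt n) k a) \<longlonglongrightarrow> r k a"
    using replicator_limit_point_max[OF sol q KL] by blast
  from conv have "\<forall>k\<in>{1..K}. \<forall>a\<in>{1..A}. (\<lambda>n. p (tt n) k a) \<longlonglongrightarrow> q k a"
    using unique[OF r] by simp
  then show ?thesis
    using replicator_converges_to_limit_point_max[OF sol q KL] tt by blast
qed

lemma replicator_interior_tendsto_potential_max:
  assumes sol: "replicator_solution K A P b s g p" and int: "interior_profile K A (p 0)"
  shows "\<exists>r. potential_max r \<and> converges_to K A p r"
proof -
  have KL: "KL_finite K A r (p 0)" for r
    using int by (simp add: KL_finite_def interior_profile_def)
  obtain m where "potential_max m"
    using potential_max_exists[OF replicator_in_Delta[OF sol, of 0]] by auto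
  then obtain tt r where "\<forall>n. real n \<le> tt n" and r: "potential_max r"
    and "\<forall>k\<in>{1..K}. \<forall>a\<in>{1..A}. (\<lambda>n. p (tt n) k a) \<longlonglongrightarrow> r k a"
    using replicator_limit_point_max[OF sol _ KL] by blast
  then show ?thesis
    using replicator_converges_to_limit_point_max[OF sol r KL] r by blast
qed

end

theorem theorem2:
  fixes K A :: nat and P b s :: "nat \<Rightarrow> real" and g :: "nat \<Rightarrow> nat \<Rightarrow> real"
  assumes "\<forall>k\<in>{1..K}. 0 < P k"
    and "\<forall>a\<in>{1..A}. 0 < b a"
    and "\<forall>a\<in>{1..A}. 0 < s a"
    and "\<forall>k\<in>{1..K}. \<forall>a\<in>{1..A}. 0 < g k a"
  shows
    "(\<forall>q p. nash_eq K A P b s g q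
         \<and> (\<forall>q'. nash_eq K A P b s g q' \<longrightarrow> (\<forall>k\<in>{1..K}. \<forall>a\<in>{1..A}. q' k a = q k a))
         \<and> replicator_solution K A P b s g p
         \<and> KL_finite K A q (p 0)
       \<longrightarrow> converges_to K A p q)
     \<and> (\<forall>p. replicator_solution K A P b s g p \<and> interior_profile K A (p 0)
       \<longrightarrow> (\<exists>q. nash_eq K A P b s g q \<and> converges_to K A p q))"
proof -
  interpret mac_game K A P b s g using assms by unfold_locales
  show ?thesis
  proof (intro conjI allI impI; elim conjE)
    fix q p
    assume q: "nash_eq K A P b s g q"
      and unique: "\<forall>q'. nash_eq K A P b s g q' \<longrightarrow> (\<forall>k\<in>{1..K}. \<forall>a\<in>{1..A}. q' k a = q k a)"
      and "replicator_solution K A P b s g p" and "KL_finite K A q (p 0)"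
    moreover have "potential_max q" using unique_nash_imp_potential_max[OF q] unique by blast
    ultimately show "converges_to K A p q"
      using replicator_tendsto_unique_potential_max potential_max_imp_nash by blast
  next
    fix p
    assume "replicator_solution K A P b s g p" and "interior_profile K A (p 0)"
    then show "\<exists>q. nash_eq K A P b s g q \<and> converges_to K A p q"
      using replicator_interior_tendsto_potential_max potential_max_imp_nash by blast
  qed
qed

end
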